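(* Let $X=X_1\cdots X_n$ be uniformly distributed on $\{0,1\}^n$ (i.e. $X_i$ i.i.d. $\mathrm{Bernoulli}(1/2)$), and let $Y^1,\dots,Y^t$ be the outputs of $t$ independent deletion channels with deletion probability $\delta$ on input $X$. Let $y^1,\dots,y^t$ be observed traces with $\Pr(Y^1=y^1,\dots,Y^t=y^t)>0$, and write $I(w)=\langle y^1\uparrow\cdots\uparrow y^t,w\rangle$. Then for every $i\in\{1,\dots,n\}$, $$\Pr(X_i=1\mid Y^1=y^1,\dots,Y^t=y^t)=\frac{\displaystyle\sum_{k=0}^n 2^{n-k-1}\binom{n-1}{k}\sum_{w\in\{0,1\}^k}I(w)+\sum_{k=0}^n\sum_{j=1}^k 2^{n-k}\binom{i-1}{j-1}\binom{n-i}{k-j}\sum_{\substack{w\in\{0,1\}^k\\ w_j=1}}I(w)}{\displaystyle\sum_{k=0}^n 2^{n-k}\binom{n}{k}\sum_{w\in\{0,1\}^k}I(w)}.$$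
   Context: The deletion channel with deletion probability $\delta$ deletes each input symbol independently with probability $\delta$ and outputs the subsequence of undeleted symbols; the $t$ channels act independently given $X$. Classical binomial coefficients satisfy $\binom{a}{b}=0$ whenever $b>a$ or $b<0$. Infiltration coefficient: for binary sequences $f_1,\dots,f_t$ and $w$, $\langle f_1\uparrow\cdots\uparrow f_t,w\rangle$ is the number of tuples $(S_1,\dots,S_t)$ of subsets of $\{1,\dots,|w|\}$ such that $|S_j|=|f_j|$, the subsequence of $w$ indexed by $S_j$ equals $f_j$ for each $j$, and $S_1\cup\cdots\cup S_t=\{1,\dots,|w|\}$ (i.e. the number of ways to obtain $w$ as a supersequence of $f_1,\dots,f_t$ in which every symbol of $w$ is covered by at least one $f_j$). *)

theory Defs
  imports "HOL-Probability.Probability"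
begin

text \<open>Binary sequences are bool lists; True encodes the symbol 1.
  Positions are 0-based internally: the paper's X_i is x ! (i - 1).\<close>

fun del_chan :: "real \<Rightarrow> bool list \<Rightarrow> bool list pmf" where
  "del_chan d [] = return_pmf []"
| "del_chan d (x # xs) =
     bernoulli_pmf d \<bind> (\<lambda>del. del_chan d xs \<bind> (\<lambda>ys.
       return_pmf (if del then ys else x # ys)))"

fun traces :: "real \<Rightarrow> nat \<Rightarrow> bool list \<Rightarrow> bool list list pmf" where
  "traces d 0 x = return_pmf []"
| "traces d (Suc t) x =
     del_chan d x \<bind> (\<lambda>y. traces d t x \<bind> (\<lambda>ys. return_pmf (y # ys)))"

definition joint :: "real \<Rightarrow> nat \<Rightarrow> nat \<Rightarrow> (bool list \<times> bool list list) pmf" where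
  "joint d n t =
     pmf_of_set {xs :: bool list. length xs = n} \<bind> (\<lambda>x.
       traces d t x \<bind> (\<lambda>ys. return_pmf (x, ys)))"

text \<open>Infiltration coefficient <f_1 \<up> ... \<up> f_t, w> for the list fs = [f_1,...,f_t];
  index sets are subsets of {0..<length w} (0-based positions).\<close>
definition infil :: "bool list list \<Rightarrow> bool list \<Rightarrow> nat" where
  "infil fs w = card {Ss :: nat set list. length Ss = length fs \<and>
      (\<forall>j < length fs. Ss ! j \<subseteq> {0..<length w} \<and> card (Ss ! j) = length (fs ! j)
                       \<and> nths w (Ss ! j) = fs ! j) \<and>
      \<Union> (set Ss) = {0..<length w}}"

end

theory Submission
  imports Defs
begin

text \<open>
  Given the input x, a trace z arises from exactly those deletion patterns that keep an
  occurrence of z as a subsequence of x, so Pr(Y = z | X = x) = d^(|x|-|z|) (1-d)^|z| (x choose z),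
  where (x choose z) counts these occurrences. The factor in front does not depend on x, hence
  the posterior is a ratio of two sums over x of the products of (x choose y^j).
  Such a product expands as the sum over w of the infiltration coefficient of the traces in w
  times (x choose w): the union of t occurrences of the traces in x is an occurrence of some w,
  and the t occurrences factor uniquely through it. It remains to sum (x choose w) over x:
  over all of {0,1}^n this gives 2^(n-|w|) (n choose |w|), and with x_i = 1 one splits the
  occurrences according to whether position i is used and, if so, by which symbol w_j.
\<close>

section \<open>The deletion channel\<close>

text \<open>\<open>subseq_count x z\<close> is the binomial coefficient of words (x choose z): the number of
  index sets S with \<open>nths x S = z\<close>.\<close>

fun subseq_count :: "'a list \<Rightarrow> 'a list \<Rightarrow> nat" where
  "subseq_count [] z = (if z = [] then 1 else 0)"
| "subseq_count (a # x) [] = 1"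
| "subseq_count (a # x) (b # z) =
     subseq_count x (b # z) + (if a = b then subseq_count x z else 0)"

lemma subseq_count_Nil2 [simp]: "subseq_count x [] = 1"
  by (cases x) auto

lemma subseq_count_Cons:
  "subseq_count (a # x) z =
     subseq_count x z + (if z \<noteq> [] \<and> hd z = a then subseq_count x (tl z) else 0)"
  by (cases z) auto

lemma subseq_count_eq_0_if_longer: "length x < length z \<Longrightarrow> subseq_count x z = 0"
  by (induction x arbitrary: z) (auto simp: subseq_count_Cons)

lemma pmf_map_Cons:
  "pmf (map_pmf (Cons a) M) z = (if z \<noteq> [] \<and> hd z = a then pmf M (tl z) else 0)"
proof (cases "z \<noteq> [] \<and> hd z = a")
  case True
  then have "z = a # tl z" by auto
  then show ?thesis using True by (metis pmf_map_inj' list.inject inj_def)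
next
  case False
  then have "z \<notin> set_pmf (map_pmf (Cons a) M)" by auto
  then have "pmf (map_pmf (Cons a) M) z = 0" by (simp add: pmf_eq_0_set_pmf)
  then show ?thesis using False by auto
qed

lemma pmf_del_chan:
  assumes "0 \<le> d" "d \<le> 1"
  shows "pmf (del_chan d x) z =
           d ^ (length x - length z) * (1 - d) ^ length z * real (subseq_count x z)"
proof (induction x arbitrary: z)
  case Nil
  then show ?case by (simp add: pmf_return indicator_def)
next
  case (Cons a x)
  have bernoulli_bind: "pmf (bernoulli_pmf d \<bind> g) z = d * pmf (g True) z + (1 - d) * pmf (g False) z"
    for g :: "bool \<Rightarrow> bool list pmf"
    using assms by (simp add: pmf_bind)
  have "pmf (del_chan d (a # x)) z =
          d * pmf (del_chan d x) z + (1 - d) * pmf (map_pmf (Cons a) (del_chan d x)) z"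
    by (simp add: bernoulli_bind map_pmf_def bind_return_pmf')
  also have "\<dots> = d ^ (length (a # x) - length z) * (1 - d) ^ length z
                    * real (subseq_count (a # x) z)"
  proof (cases z)
    case (Cons b z')
    show ?thesis
    proof (cases "length z \<le> length x")
      case True
      then have "length x - length z' = Suc (length x - length z)"
        using Cons by simp
      then show ?thesis using Cons.IH Cons
        by (simp add: pmf_map_Cons subseq_count_Cons algebra_simps)
    next
      case False
      then show ?thesis using Cons.IH Cons
        by (auto simp: pmf_map_Cons subseq_count_eq_0_if_longer)
    qed
  qed (simp add: Cons.IH pmf_map_Cons)
  finally show ?case .
qed

lemma traces_Suc:
  "traces d (Suc t) x = map_pmf (\<lambda>(z, zs). z # zs) (pair_pmf (del_chan d x) (traces d t x))"
  by (simp add: pair_pmf_def map_pmf_def bind_assoc_pmf bind_return_pmf)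

lemma pmf_traces:
  "pmf (traces d t x) ys = (if length ys = t then (\<Prod>j<t. pmf (del_chan d x) (ys ! j)) else 0)"
proof (induction t arbitrary: ys)
  case 0
  then show ?case by (simp add: pmf_return indicator_def)
next
  case (Suc t)
  show ?case
  proof (cases ys)
    case Nil
    then have "ys \<notin> set_pmf (traces d (Suc t) x)" by (auto simp: traces_Suc)
    then show ?thesis using Nil by (simp add: pmf_eq_0_set_pmf)
  next
    case (Cons z zs)
    have "inj (\<lambda>(z :: bool list, zs :: bool list list). z # zs)"
      by (auto simp: inj_def)
    then have "pmf (traces d (Suc t) x) ys = pmf (del_chan d x) z * pmf (traces d t x) zs"
      unfolding traces_Suc Cons by (metis pmf_map_inj' case_prod_conv pmf_pair)
    then show ?thesis using Suc.IH Cons unfolding prod.lessThan_Suc_shift by simp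
  qed
qed

section \<open>Sums over words\<close>

abbreviation words :: "nat \<Rightarrow> 'a list set" where
  "words n \<equiv> {xs. length xs = n}"

lemma finite_words [simp]: "finite (words n :: 'a :: finite list set)"
  using finite_lists_length_eq[of "UNIV :: 'a set" n] by simp

lemma finite_words_le [simp]: "finite {xs :: 'a :: finite list. length xs \<le> n}"
  using finite_lists_length_le[of "UNIV :: 'a set" n] by simp

lemma words_nonempty: "words n \<noteq> {}"
  by (metis (mono_tags) empty_Collect_eq length_replicate)

lemma sum_words_Suc:
  "(\<Sum>x \<in> words (Suc n). f x) = (\<Sum>a \<in> UNIV. \<Sum>x \<in> words n. f (a # x :: 'a :: finite list))"
proof -
  have "(\<Sum>(a, x) \<in> UNIV \<times> words n. f (a # x)) = (\<Sum>x \<in> words (Suc n). f x)"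
    by (rule sum.reindex_bij_witness[where i = "\<lambda>x. (hd x, tl x)" and j = "\<lambda>(a, x). a # x"])
       (auto simp: length_Suc_conv)
  then show ?thesis by (simp add: sum.cartesian_product)
qed

lemma sum_words_le:
  "(\<Sum>w \<in> {w :: 'a :: finite list. length w \<le> n}. f w) = (\<Sum>k = 0..n. \<Sum>w \<in> words k. f w)"
proof -
  have "{w :: 'a list. length w \<le> n} = (\<Union>k \<in> {0..n}. words k)" by auto
  then show ?thesis by (simp only:) (rule sum.UNION_disjoint, auto)
qed

lemma sum_words_append:
  "(\<Sum>z \<in> words (p + q). f z) = (\<Sum>u \<in> words p. \<Sum>v \<in> words q. f (u @ v :: 'a :: finite list))"
proof -
  have "(\<Sum>(u, v) \<in> words p \<times> words q. f (u @ v)) = (\<Sum>z \<in> words (p + q). f z)"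
    by (rule sum.reindex_bij_witness[where i = "\<lambda>z. (take p z, drop p z)" and j = "\<lambda>(u, v). u @ v"])
       auto
  then show ?thesis by (simp add: sum.cartesian_product)
qed

lemma sum_words_nth_eq:
  assumes "p < n"
  shows "(\<Sum>x \<in> {x. length x = n \<and> x ! p = c}. f x)
           = (\<Sum>u \<in> words p. \<Sum>v \<in> words (n - 1 - p). f (u @ c # v :: 'a :: finite list))"
proof -
  have "(\<Sum>(u, v) \<in> words p \<times> words (n - 1 - p). f (u @ c # v)) = (\<Sum>x \<in> {x. length x = n \<and> x ! p = c}. f x)"
  proof (rule sum.reindex_bij_witness[where i = "\<lambda>x. (take p x, drop (Suc p) x)" and j = "\<lambda>(u, v). u @ c # v"])
    fix x assume "x \<in> {x. length x = n \<and> x ! p = c}"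
    then show "(case (take p x, drop (Suc p) x) of (u, v) \<Rightarrow> u @ c # v) = x"
      using assms by (auto simp: id_take_nth_drop[symmetric])
  qed (use assms in \<open>auto simp: nth_append\<close>)
  then show ?thesis by (simp add: sum.cartesian_product)
qed

lemma sum_subseq_count:
  "(\<Sum>x \<in> words n. subseq_count x w) = CARD('a) ^ (n - length w) * (n choose length w)"
  for w :: "'a :: finite list"
proof (induction n arbitrary: w)
  case 0
  then show ?case by (cases w) auto
next
  case (Suc n)
  have "(\<Sum>x \<in> words (Suc n). subseq_count x w)
          = (\<Sum>a :: 'a \<in> UNIV. \<Sum>x \<in> words n. subseq_count x w)
            + (\<Sum>a :: 'a \<in> UNIV. \<Sum>x \<in> words n. if w \<noteq> [] \<and> hd w = a then subseq_count x (tl w) else 0)"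
    by (simp only: sum_words_Suc subseq_count_Cons sum.distrib)
  also have "\<dots> = CARD('a) * (\<Sum>x \<in> words n. subseq_count x w)
            + (if w \<noteq> [] then \<Sum>x \<in> words n. subseq_count x (tl w) else 0)"
    by (subst (2) sum.swap) (simp add: sum.delta)
  also have "\<dots> = CARD('a) ^ (Suc n - length w) * (Suc n choose length w)"
  proof (cases w)
    case (Cons b w')
    show ?thesis
    proof (cases "length w' < n")
      case True
      then have "Suc (n - length w) = n - length w'" using Cons by simp
      then show ?thesis using Suc.IH Cons by (simp add: algebra_simps flip: power_Suc)
    next
      case False
      then show ?thesis using Suc.IH Cons by simp
    qed
  qed (use Suc.IH[of "[]"] in simp)
  finally show ?case .
qed

section \<open>Infiltration\<close>

text \<open>The tuples counted by \<^const>\<open>infil\<close>; the cardinality condition in its definition is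
  implied by the others.\<close>

definition covers :: "'a list list \<Rightarrow> 'a list \<Rightarrow> nat set list set" where
  "covers ys w = {Ss. length Ss = length ys \<and>
      (\<forall>j < length ys. Ss ! j \<subseteq> {0..<length w} \<and> nths w (Ss ! j) = ys ! j) \<and>
      \<Union> (set Ss) = {0..<length w}}"

lemma infil_eq_card_covers: "infil ys w = card (covers ys w)"
proof -
  have card_eq: "card S = length (nths w S)" if "S \<subseteq> {0..<length w}" for S
  proof -
    have "{i. i < length w \<and> i \<in> S} = S" using that by auto
    then show ?thesis by (simp add: length_nths)
  qed
  have "(\<forall>j < length ys. Ss ! j \<subseteq> {0..<length w} \<and> card (Ss ! j) = length (ys ! j)
                           \<and> nths w (Ss ! j) = ys ! j)
        \<longleftrightarrow> (\<forall>j < length ys. Ss ! j \<subseteq> {0..<length w} \<and> nths w (Ss ! j) = ys ! j)" for Ss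
    using card_eq by auto
  then show ?thesis
    unfolding infil_def covers_def by (simp only:)
qed

lemma finite_covers: "finite (covers ys w)"
proof (rule finite_subset)
  show "covers ys w \<subseteq> {Ss. set Ss \<subseteq> Pow {0..<length w} \<and> length Ss = length ys}"
    by (auto simp: covers_def)
  show "finite {Ss. set Ss \<subseteq> Pow {0..<length w} \<and> length Ss = length ys}"
    by (rule finite_lists_length_eq) simp
qed

lemma mem_Union_set_conv_nth: "x \<in> \<Union> (set Ss) \<longleftrightarrow> (\<exists>j < length Ss. x \<in> Ss ! j)"
  by (auto simp: in_set_conv_nth) (use nth_mem in blast)

lemma card_covers_Nil: "card (covers ys []) = (if \<forall>j < length ys. ys ! j = [] then 1 else 0)"
proof (cases "\<forall>j < length ys. ys ! j = []")
  case True
  have "Ss = replicate (length ys) {}" if "Ss \<in> covers ys []" for Ss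
  proof -
    have "length Ss = length ys" "\<forall>j < length ys. Ss ! j \<subseteq> {}"
      using that by (simp_all add: covers_def)
    then show ?thesis by (simp add: list_eq_iff_nth_eq)
  qed
  moreover have "replicate (length ys) {} \<in> covers ys []"
    using True by (simp add: covers_def)
  ultimately have "covers ys [] = {replicate (length ys) {}}" by blast
  then show ?thesis using True by simp
next
  case False
  then obtain j where "j < length ys" "ys ! j \<noteq> []" by blast
  then have "Ss \<notin> covers ys []" for Ss by (force simp: covers_def)
  then have "covers ys [] = {}" by blast
  then show ?thesis using False by simp
qed

definition starting_with :: "'a \<Rightarrow> 'a list list \<Rightarrow> nat set" where
  "starting_with b ys = {j. j < length ys \<and> ys ! j \<noteq> [] \<and> hd (ys ! j) = b}"

definition drop_heads :: "nat set \<Rightarrow> 'a list list \<Rightarrow> 'a list list" where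
  "drop_heads J ys = map (\<lambda>j. if j \<in> J then tl (ys ! j) else ys ! j) [0..<length ys]"

definition cons_cover :: "nat set \<Rightarrow> nat set list \<Rightarrow> nat set list" where
  "cons_cover J Ss = map (\<lambda>j. (if j \<in> J then {0} else {}) \<union> Suc ` (Ss ! j)) [0..<length Ss]"

definition tl_cover :: "nat set list \<Rightarrow> nat set list" where
  "tl_cover Ss = map (\<lambda>S. {k. Suc k \<in> S}) Ss"

definition sets_containing_0 :: "nat set list \<Rightarrow> nat set" where
  "sets_containing_0 Ss = {j. j < length Ss \<and> 0 \<in> Ss ! j}"

lemma length_drop_heads [simp]: "length (drop_heads J ys) = length ys"
  by (simp add: drop_heads_def)

lemma nth_drop_heads [simp]:
  "j < length ys \<Longrightarrow> drop_heads J ys ! j = (if j \<in> J then tl (ys ! j) else ys ! j)"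
  by (simp add: drop_heads_def)

lemma length_cons_cover [simp]: "length (cons_cover J Ss) = length Ss"
  by (simp add: cons_cover_def)

lemma nth_cons_cover [simp]:
  "j < length Ss \<Longrightarrow> cons_cover J Ss ! j = (if j \<in> J then {0} else {}) \<union> Suc ` (Ss ! j)"
  by (simp add: cons_cover_def)

lemma length_tl_cover [simp]: "length (tl_cover Ss) = length Ss"
  by (simp add: tl_cover_def)

lemma nth_tl_cover [simp]: "j < length Ss \<Longrightarrow> tl_cover Ss ! j = {k. Suc k \<in> Ss ! j}"
  by (simp add: tl_cover_def)

lemma tl_cover_cons_cover [simp]: "tl_cover (cons_cover J Ss) = Ss"
  by (rule nth_equalityI) auto

lemma sets_containing_0_cons_cover:
  "J \<subseteq> {..<length Ss} \<Longrightarrow> sets_containing_0 (cons_cover J Ss) = J"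
  by (auto simp: sets_containing_0_def split: if_splits)

lemma cons_cover_tl_cover [simp]: "cons_cover (sets_containing_0 Ss) (tl_cover Ss) = Ss"
proof (rule nth_equalityI)
  fix j assume "j < length (cons_cover (sets_containing_0 Ss) (tl_cover Ss))"
  moreover have "(if 0 \<in> S then {0} else {}) \<union> Suc ` {k. Suc k \<in> S} = S" for S
  proof (rule set_eqI)
    show "x \<in> (if 0 \<in> S then {0} else {}) \<union> Suc ` {k. Suc k \<in> S} \<longleftrightarrow> x \<in> S" for x
      by (cases x) auto
  qed
  ultimately show "cons_cover (sets_containing_0 Ss) (tl_cover Ss) ! j = Ss ! j"
    by (simp add: sets_containing_0_def)
qed simp

lemma cons_cover_mem_covers:
  assumes J: "J \<subseteq> starting_with b ys" "J \<noteq> {}"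
    and Ss: "Ss \<in> covers (drop_heads J ys) w"
  shows "cons_cover J Ss \<in> covers ys (b # w)"
proof -
  have len: "length Ss = length ys" using Ss by (simp add: covers_def)
  have Ss_j: "Ss ! j \<subseteq> {0..<length w}" "nths w (Ss ! j) = drop_heads J ys ! j"
    if "j < length ys" for j
    using Ss that by (auto simp: covers_def)
  have "nths (b # w) (cons_cover J Ss ! j) = ys ! j" if j: "j < length ys" for j
  proof (cases "j \<in> J")
    case True
    then have "ys ! j = b # tl (ys ! j)"
      using J(1) by (auto simp: starting_with_def)
    with True show ?thesis using j len Ss_j(2)[OF j] by (simp add: nths_Cons inj_image_mem_iff)
  qed (use j len Ss_j(2)[OF j] in \<open>simp add: nths_Cons inj_image_mem_iff\<close>)
  moreover have "cons_cover J Ss ! j \<subseteq> {0..<length (b # w)}" if "j < length ys" for j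
    using Ss_j(1)[OF that] that len by auto
  moreover have "\<Union> (set (cons_cover J Ss)) = {0..<length (b # w)}"
  proof -
    have "\<Union> (set Ss) = {0..<length w}" using Ss by (simp add: covers_def)
    moreover have "Suc k \<in> \<Union> (set (cons_cover J Ss)) \<longleftrightarrow> k \<in> \<Union> (set Ss)" for k
      unfolding mem_Union_set_conv_nth by (auto simp: inj_image_mem_iff split: if_splits)
    ultimately have Suc_mem: "Suc k \<in> \<Union> (set (cons_cover J Ss)) \<longleftrightarrow> k < length w" for k
      by simp
    obtain j where "j \<in> J" "j < length Ss"
      using J len by (force simp: starting_with_def)
    then have zero_mem: "0 \<in> \<Union> (set (cons_cover J Ss))"
      unfolding mem_Union_set_conv_nth by (intro exI[of _ j]) simp
    show ?thesis
    proof (rule set_eqI)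
      show "i \<in> \<Union> (set (cons_cover J Ss)) \<longleftrightarrow> i \<in> {0..<length (b # w)}" for i
        using Suc_mem zero_mem by (cases i) auto
    qed
  qed
  ultimately show ?thesis using len by (simp add: covers_def)
qed

lemma tl_cover_mem_covers:
  assumes Ss: "Ss \<in> covers ys (b # w)"
  shows "sets_containing_0 Ss \<subseteq> starting_with b ys" "sets_containing_0 Ss \<noteq> {}"
    and "tl_cover Ss \<in> covers (drop_heads (sets_containing_0 Ss) ys) w"
proof -
  have len: "length Ss = length ys" using Ss by (simp add: covers_def)
  have U: "\<Union> (set Ss) = {0..<Suc (length w)}" using Ss by (simp add: covers_def)
  have Ss_j: "Ss ! j \<subseteq> {0..<Suc (length w)}" "nths (b # w) (Ss ! j) = ys ! j"
    if "j < length ys" for j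
    using Ss that by (simp_all add: covers_def)
  have ys_j: "ys ! j = (if 0 \<in> Ss ! j then [b] else []) @ nths w (tl_cover Ss ! j)"
    if "j < length ys" for j
    using Ss_j(2)[OF that] that len by (simp add: nths_Cons)
  show "sets_containing_0 Ss \<subseteq> starting_with b ys"
  proof
    fix j assume "j \<in> sets_containing_0 Ss"
    then have "j < length ys" "0 \<in> Ss ! j" using len by (simp_all add: sets_containing_0_def)
    then show "j \<in> starting_with b ys" using ys_j by (simp add: starting_with_def)
  qed
  have "0 \<in> \<Union> (set Ss)" using U by simp
  then show "sets_containing_0 Ss \<noteq> {}"
    unfolding mem_Union_set_conv_nth sets_containing_0_def by blast
  have "k \<in> \<Union> (set (tl_cover Ss)) \<longleftrightarrow> Suc k \<in> \<Union> (set Ss)" for k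
    unfolding mem_Union_set_conv_nth by auto
  then have "\<Union> (set (tl_cover Ss)) = {0..<length w}"
    using U by (intro set_eqI) simp
  moreover have "tl_cover Ss ! j \<subseteq> {0..<length w}" if "j < length ys" for j
    using Ss_j(1)[OF that] that len by auto
  moreover have "nths w (tl_cover Ss ! j) = drop_heads (sets_containing_0 Ss) ys ! j"
    if "j < length ys" for j
    using ys_j[OF that] that len by (simp add: sets_containing_0_def)
  ultimately show "tl_cover Ss \<in> covers (drop_heads (sets_containing_0 Ss) ys) w"
    using len by (simp add: covers_def)
qed

text \<open>A cover of \<open>b # w\<close> is determined by the nonempty set J of sequences using position 0,
  all of which start with b, together with a cover of w by the sequences with those heads
  dropped.\<close>

lemma card_covers_Cons:
  "card (covers ys (b # w))
     = (\<Sum>J \<in> Pow (starting_with b ys) - {{}}. card (covers (drop_heads J ys) w))"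
proof -
  have "J \<subseteq> {..<length Ss}" if "J \<subseteq> starting_with b ys" "Ss \<in> covers (drop_heads J ys) w" for J Ss
    using that by (auto simp: starting_with_def covers_def)
  then have "bij_betw (\<lambda>(J, Ss). cons_cover J Ss)
          (SIGMA J : Pow (starting_with b ys) - {{}}. covers (drop_heads J ys) w)
          (covers ys (b # w))"
    by (intro bij_betw_byWitness[where f' = "\<lambda>Ss. (sets_containing_0 Ss, tl_cover Ss)"])
       (auto simp: sets_containing_0_cons_cover tl_cover_mem_covers intro!: cons_cover_mem_covers
             dest: tl_cover_mem_covers(1)[THEN subsetD])
  then have "card (covers ys (b # w))
               = card (SIGMA J : Pow (starting_with b ys) - {{}}. covers (drop_heads J ys) w)"
    by (rule bij_betw_same_card[symmetric])
  also have "\<dots> = (\<Sum>J \<in> Pow (starting_with b ys) - {{}}. card (covers (drop_heads J ys) w))"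
    by (rule card_SigmaI) (simp_all add: starting_with_def finite_covers)
  finally show ?thesis .
qed

lemma prod_add_supported:
  fixes g h :: "'b \<Rightarrow> 'a :: comm_semiring_1"
  assumes "finite A" "S \<subseteq> A" "\<And>j. j \<in> A - S \<Longrightarrow> g j = 0"
  shows "(\<Prod>j\<in>A. g j + h j) = (\<Sum>J \<in> Pow S. (\<Prod>j\<in>J. g j) * (\<Prod>j\<in>A - J. h j))"
proof -
  have "(\<Prod>j\<in>A. g j + h j) = (\<Sum>J \<in> Pow A. (\<Prod>j\<in>J. g j) * (\<Prod>j\<in>A - J. h j))"
    by (rule prod_add) (fact assms(1))
  also have "\<dots> = (\<Sum>J \<in> Pow S. (\<Prod>j\<in>J. g j) * (\<Prod>j\<in>A - J. h j))"
  proof (rule sum.mono_neutral_right)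
    show "\<forall>J \<in> Pow A - Pow S. (\<Prod>j\<in>J. g j) * (\<Prod>j\<in>A - J. h j) = 0"
    proof
      fix J assume J: "J \<in> Pow A - Pow S"
      then obtain j where "j \<in> J" "g j = 0" using assms(3) by blast
      moreover have "finite J" using J assms(1) finite_subset by blast
      ultimately have "(\<Prod>j\<in>J. g j) = 0" by (meson prod_zero)
      then show "(\<Prod>j\<in>J. g j) * (\<Prod>j\<in>A - J. h j) = 0" by simp
    qed
  qed (use assms in auto)
  finally show ?thesis .
qed

lemma prod_subseq_count_Cons:
  "(\<Prod>j<length ys. subseq_count (a # x) (ys ! j))
     = (\<Sum>J \<in> Pow (starting_with a ys). \<Prod>j<length ys. subseq_count x (drop_heads J ys ! j))"
proof -
  define g where "g j = (if ys ! j \<noteq> [] \<and> hd (ys ! j) = a then subseq_count x (tl (ys ! j)) else 0)" for j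
  have S: "starting_with a ys \<subseteq> {..<length ys}" by (auto simp: starting_with_def)
  have "(\<Prod>j<length ys. subseq_count (a # x) (ys ! j)) = (\<Prod>j<length ys. g j + subseq_count x (ys ! j))"
    by (simp add: subseq_count_Cons g_def add.commute)
  also have "\<dots> = (\<Sum>J \<in> Pow (starting_with a ys).
                      (\<Prod>j\<in>J. g j) * (\<Prod>j \<in> {..<length ys} - J. subseq_count x (ys ! j)))"
    using S by (intro prod_add_supported) (auto simp: g_def starting_with_def)
  also have "\<dots> = (\<Sum>J \<in> Pow (starting_with a ys). \<Prod>j<length ys. subseq_count x (drop_heads J ys ! j))"
  proof (rule sum.cong[OF refl])
    fix J assume "J \<in> Pow (starting_with a ys)"
    then have J: "J \<subseteq> starting_with a ys" "J \<subseteq> {..<length ys}" using S by auto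
    have "(\<Prod>j<length ys. subseq_count x (drop_heads J ys ! j))
            = (\<Prod>j<length ys. if j \<in> J then subseq_count x (tl (ys ! j)) else subseq_count x (ys ! j))"
      by (rule prod.cong) auto
    also have "\<dots> = (\<Prod>j\<in>J. subseq_count x (tl (ys ! j))) * (\<Prod>j \<in> {..<length ys} - J. subseq_count x (ys ! j))"
      using J(2) by (simp add: prod.If_cases Int_absorb1 Diff_eq)
    also have "(\<Prod>j\<in>J. subseq_count x (tl (ys ! j))) = (\<Prod>j\<in>J. g j)"
      using J(1) by (intro prod.cong) (auto simp: g_def starting_with_def)
    finally show "(\<Prod>j\<in>J. g j) * (\<Prod>j \<in> {..<length ys} - J. subseq_count x (ys ! j))
                    = (\<Prod>j<length ys. subseq_count x (drop_heads J ys ! j))" ..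
  qed
  finally show ?thesis .
qed

lemma sum_words_le_Cons:
  "(\<Sum>w \<in> {w. length w \<le> Suc N}. if w \<noteq> [] \<and> hd w = a then f w else 0)
     = (\<Sum>w \<in> {w :: 'a :: finite list. length w \<le> N}. f (a # w))"
proof -
  have "{w \<in> {w. length w \<le> Suc N}. w \<noteq> [] \<and> hd w = a} = Cons a ` {w :: 'a list. length w \<le> N}"
    by (auto simp: image_iff neq_Nil_conv)
  then show ?thesis
    by (simp add: sum.inter_filter[symmetric] sum.reindex)
qed

text \<open>The occurrences of the \<open>ys ! j\<close> in x jointly cover an occurrence of some w in x,
  through which they factor uniquely.\<close>

lemma prod_subseq_count_eq_sum_covers:
  fixes x :: "'a :: finite list"
  assumes "length x \<le> N"
  shows "(\<Prod>j<length ys. subseq_count x (ys ! j))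
           = (\<Sum>w \<in> {w. length w \<le> N}. card (covers ys w) * subseq_count x w)"
  using assms
proof (induction x arbitrary: ys N)
  case Nil
  have "(\<Prod>j<length ys. subseq_count [] (ys ! j)) = card (covers ys [])"
    by (auto simp: card_covers_Nil intro: prod_zero)
  also have "\<dots> = (\<Sum>w \<in> {w :: 'a list. length w \<le> N}. card (covers ys w) * subseq_count [] w)"
    by (simp add: if_distrib[of "\<lambda>c. _ * c"] sum.delta' cong: if_cong)
  finally show ?case .
next
  case (Cons a x)
  obtain N' where N: "N = Suc N'" "length x \<le> N'" using Cons.prems by (cases N) auto
  let ?S = "\<lambda>M. {w :: 'a list. length w \<le> M}"
  have IH_J: "(\<Prod>j<length ys. subseq_count x (drop_heads J ys ! j))
                = (\<Sum>w \<in> ?S N'. card (covers (drop_heads J ys) w) * subseq_count x w)" for J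
    using Cons.IH[OF N(2), of "drop_heads J ys"] by simp
  have "(\<Prod>j<length ys. subseq_count (a # x) (ys ! j))
          = (\<Prod>j<length ys. subseq_count x (drop_heads {} ys ! j))
            + (\<Sum>J \<in> Pow (starting_with a ys) - {{}}. \<Prod>j<length ys. subseq_count x (drop_heads J ys ! j))"
    unfolding prod_subseq_count_Cons by (rule sum.remove) (auto simp: starting_with_def)
  also have "\<dots> = (\<Sum>w \<in> ?S N. card (covers ys w) * subseq_count x w)
      + (\<Sum>J \<in> Pow (starting_with a ys) - {{}}. \<Sum>w \<in> ?S N'. card (covers (drop_heads J ys) w) * subseq_count x w)"
    using Cons.IH[of N ys] N IH_J by simp
  also have "\<dots> = (\<Sum>w \<in> ?S N. card (covers ys w) * subseq_count x w)
      + (\<Sum>w \<in> ?S N'. \<Sum>J \<in> Pow (starting_with a ys) - {{}}. card (covers (drop_heads J ys) w) * subseq_count x w)"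
    by (subst sum.swap) (rule refl)
  also have "\<dots> = (\<Sum>w \<in> ?S N. card (covers ys w) * subseq_count x w)
      + (\<Sum>w \<in> ?S N. if w \<noteq> [] \<and> hd w = a then card (covers ys w) * subseq_count x (tl w) else 0)"
    by (simp add: N(1) sum_words_le_Cons card_covers_Cons sum_distrib_right)
  also have "\<dots> = (\<Sum>w \<in> ?S N. card (covers ys w) * subseq_count (a # x) w)"
    by (simp add: sum.distrib[symmetric] subseq_count_Cons algebra_simps if_distrib[of "\<lambda>c. _ * c"] cong: if_cong)
  finally show ?case .
qed

section \<open>Fixing one input symbol\<close>

text \<open>Occurrences of w in \<open>u @ c # v\<close> that use the marked c, with \<open>w ! j\<close> placed on it.\<close>

definition subseq_count_through :: "'a list \<Rightarrow> 'a list \<Rightarrow> 'a \<Rightarrow> 'a list \<Rightarrow> nat" where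
  "subseq_count_through u v c w =
     (\<Sum>j<length w. if w ! j = c
                     then subseq_count u (take j w) * subseq_count v (drop (Suc j) w) else 0)"

lemma subseq_count_through_Nil_word [simp]: "subseq_count_through u v c [] = 0"
  by (simp add: subseq_count_through_def)

lemma subseq_count_through_Cons_word:
  "subseq_count_through u v c (b # w) =
     (if b = c then subseq_count v w else 0)
     + (\<Sum>j<length w. if w ! j = c
                       then subseq_count u (b # take j w) * subseq_count v (drop (Suc j) w) else 0)"
  unfolding subseq_count_through_def
  by (simp only: length_Cons sum.lessThan_Suc_shift) (auto intro!: sum.cong)

lemma subseq_count_through_Nil:
  "subseq_count_through [] v c w = (if w \<noteq> [] \<and> hd w = c then subseq_count v (tl w) else 0)"
  by (cases w) (simp_all add: subseq_count_through_Cons_word)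

lemma subseq_count_through_Cons_Cons:
  "subseq_count_through (a # u) v c (b # w) =
     subseq_count_through u v c (b # w) + (if a = b then subseq_count_through u v c w else 0)"
proof -
  have "(\<Sum>j<length w. if w ! j = c
          then subseq_count (a # u) (b # take j w) * subseq_count v (drop (Suc j) w) else 0)
        = (\<Sum>j<length w. if w ! j = c
            then subseq_count u (b # take j w) * subseq_count v (drop (Suc j) w) else 0)
          + (if a = b then subseq_count_through u v c w else 0)"
    by (cases "a = b")
       (simp_all add: subseq_count_through_def sum.distrib[symmetric] algebra_simps if_distrib
                 cong: if_cong)
  then show ?thesis by (simp add: subseq_count_through_Cons_word)
qed

lemma subseq_count_append_Cons:
  "subseq_count (u @ c # v) w = subseq_count (u @ v) w + subseq_count_through u v c w"
proof (induction u arbitrary: w)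
  case Nil
  then show ?case by (simp add: subseq_count_Cons subseq_count_through_Nil)
next
  case (Cons a u)
  then show ?case
    by (cases w) (simp_all add: subseq_count_through_Cons_Cons)
qed

lemma sum_words_mult_subseq_count:
  fixes u' v' :: "'a :: finite list"
  shows "(\<Sum>u \<in> words p. \<Sum>v \<in> words q. subseq_count u u' * subseq_count v v')
           = CARD('a) ^ (p + q - (length u' + length v')) * (p choose length u') * (q choose length v')"
proof -
  have "(\<Sum>u \<in> words p. \<Sum>v \<in> words q. subseq_count u u' * subseq_count v v')
          = CARD('a) ^ (p - length u') * (p choose length u')
            * (CARD('a) ^ (q - length v') * (q choose length v'))"
    by (simp add: sum_product[symmetric] sum_subseq_count)
  also have "\<dots> = CARD('a) ^ (p + q - (length u' + length v')) * (p choose length u') * (q choose length v')"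
  proof (cases "length u' \<le> p \<and> length v' \<le> q")
    case True
    then have "p + q - (length u' + length v') = (p - length u') + (q - length v')" by simp
    then show ?thesis by (simp add: power_add)
  qed auto
  finally show ?thesis .
qed

lemma sum_nth_subseq_count:
  fixes w :: "'a :: finite list"
  assumes "p < n"
  shows "(\<Sum>x \<in> {x. length x = n \<and> x ! p = c}. subseq_count x w)
           = CARD('a) ^ (n - 1 - length w) * ((n - 1) choose length w)
             + (\<Sum>j<length w. if w ! j = c
                 then CARD('a) ^ (n - length w) * (p choose j) * ((n - 1 - p) choose (length w - 1 - j))
                 else 0)"
proof -
  define q where "q = n - 1 - p"
  have pq: "p + q = n - 1" using assms by (simp add: q_def)
  have exponent: "p + q - (length (take j w) + length (drop (Suc j) w)) = n - length w"
    if "j < length w" for j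
    using that pq by simp
  have "(\<Sum>x \<in> {x. length x = n \<and> x ! p = c}. subseq_count x w)
          = (\<Sum>u \<in> words p. \<Sum>v \<in> words q. subseq_count (u @ v) w)
            + (\<Sum>u \<in> words p. \<Sum>v \<in> words q. subseq_count_through u v c w)"
    unfolding sum_words_nth_eq[OF assms] q_def subseq_count_append_Cons sum.distrib ..
  also have "(\<Sum>u \<in> words p. \<Sum>v \<in> words q. subseq_count (u @ v) w)
               = (\<Sum>z \<in> words (p + q). subseq_count z w)"
    by (rule sum_words_append[symmetric])
  also have "(\<Sum>u \<in> words p. \<Sum>v \<in> words q. subseq_count_through u v c w)
      = (\<Sum>j<length w. \<Sum>u \<in> words p. \<Sum>v \<in> words q. if w ! j = c
           then subseq_count u (take j w) * subseq_count v (drop (Suc j) w) else 0)"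
    unfolding subseq_count_through_def
    by (subst sum.swap, rule sum.cong[OF refl], subst sum.swap, rule refl)
  also have "\<dots> = (\<Sum>j<length w. if w ! j = c then \<Sum>u \<in> words p. \<Sum>v \<in> words q.
           subseq_count u (take j w) * subseq_count v (drop (Suc j) w) else 0)"
    by (intro sum.cong refl) (simp split: if_split)
  finally have "(\<Sum>x \<in> {x. length x = n \<and> x ! p = c}. subseq_count x w)
      = CARD('a) ^ (n - 1 - length w) * ((n - 1) choose length w)
        + (\<Sum>j<length w. if w ! j = c
            then CARD('a) ^ (n - length w) * (p choose j) * (q choose (length w - 1 - j)) else 0)"
    using exponent by (simp add: sum_subseq_count pq sum_words_mult_subseq_count cong: if_cong)
  then show ?thesis unfolding q_def .
qed

lemma sum_prod_subseq_count_eq_sum_covers: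
  fixes X :: "'a :: finite list set"
  assumes "X \<subseteq> words n"
  shows "(\<Sum>x \<in> X. \<Prod>j<length ys. subseq_count x (ys ! j))
           = (\<Sum>k = 0..n. \<Sum>w \<in> words k. card (covers ys w) * (\<Sum>x \<in> X. subseq_count x w))"
proof -
  have "(\<Sum>x \<in> X. \<Prod>j<length ys. subseq_count x (ys ! j))
          = (\<Sum>x \<in> X. \<Sum>w \<in> {w. length w \<le> n}. card (covers ys w) * subseq_count x w)"
    using assms by (intro sum.cong refl prod_subseq_count_eq_sum_covers) auto
  also have "\<dots> = (\<Sum>w \<in> {w. length w \<le> n}. card (covers ys w) * (\<Sum>x \<in> X. subseq_count x w))"
    by (simp add: sum.swap[of _ X] sum_distrib_left)
  finally show ?thesis by (simp add: sum_words_le)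
qed

lemma sum_prod_subseq_count:
  "(\<Sum>x \<in> words n. \<Prod>j<length ys. subseq_count x (ys ! j))
     = (\<Sum>k = 0..n. CARD('a) ^ (n - k) * (n choose k) * (\<Sum>w \<in> words k. card (covers ys (w :: 'a :: finite list))))"
  by (simp add: sum_prod_subseq_count_eq_sum_covers[of _ n] sum_subseq_count sum_distrib_left ac_simps)

lemma sum_nth_prod_subseq_count:
  assumes "p < n"
  shows "(\<Sum>x \<in> {x. length x = n \<and> x ! p = c}. \<Prod>j<length ys. subseq_count x (ys ! j))
     = (\<Sum>k = 0..n. CARD('a) ^ (n - 1 - k) * ((n - 1) choose k)
                     * (\<Sum>w \<in> words k. card (covers ys w)))
       + (\<Sum>k = 0..n. \<Sum>j<k. CARD('a) ^ (n - k) * (p choose j) * ((n - 1 - p) choose (k - 1 - j))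
                     * (\<Sum>w \<in> {w. length w = k \<and> w ! j = c}. card (covers ys (w :: 'a :: finite list))))"
proof -
  let ?cov = "\<lambda>w. card (covers ys w)"
  let ?B = "\<lambda>k j. CARD('a) ^ (n - k) * (p choose j) * ((n - 1 - p) choose (k - 1 - j))"
  have "(\<Sum>w \<in> words k. ?cov w * (\<Sum>x \<in> {x. length x = n \<and> x ! p = c}. subseq_count x w))
     = (\<Sum>w \<in> words k. ?cov w * (CARD('a) ^ (n - 1 - k) * ((n - 1) choose k)
                                      + (\<Sum>j<k. if w ! j = c then ?B k j else 0)))" for k
    by (rule sum.cong[OF refl]) (auto simp: sum_nth_subseq_count[OF assms])
  also have "\<dots> k = CARD('a) ^ (n - 1 - k) * ((n - 1) choose k) * (\<Sum>w \<in> words k. ?cov w)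
       + (\<Sum>j<k. ?B k j * (\<Sum>w \<in> words k. if w ! j = c then ?cov w else 0))" for k
    by (simp add: algebra_simps sum.distrib sum_distrib_left sum.swap[of _ "words k"]
                  if_distrib[of "\<lambda>x. _ * x"] cong: if_cong)
  finally have "(\<Sum>w \<in> words k. ?cov w * (\<Sum>x \<in> {x. length x = n \<and> x ! p = c}. subseq_count x w))
     = CARD('a) ^ (n - 1 - k) * ((n - 1) choose k) * (\<Sum>w \<in> words k. ?cov w)
       + (\<Sum>j<k. ?B k j * (\<Sum>w \<in> {w. length w = k \<and> w ! j = c}. ?cov w))" for k
    using sum.inter_filter[of "words k" ?cov "\<lambda>w. w ! j = c" for j k] by simp
  moreover have "{x. length x = n \<and> x ! p = c} \<subseteq> words n" by blast
  ultimately show ?thesis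
    by (simp add: sum_prod_subseq_count_eq_sum_covers[of _ n] sum.distrib)
qed

section \<open>The posterior\<close>

lemma card_words: "card (words n :: 'a :: finite list set) = CARD('a) ^ n"
  using card_lists_length_eq[of "UNIV :: 'a set" n] by simp

lemma pmf_joint:
  assumes "length x = n"
  shows "pmf (joint d n t) (x, ys) = pmf (traces d t x) ys / 2 ^ n"
proof -
  have "pmf (map_pmf (Pair x') (traces d t x')) (x, ys) = (if x' = x then pmf (traces d t x) ys else 0)"
    for x'
  proof (cases "x' = x")
    case True
    then show ?thesis by (simp add: pmf_map_inj' inj_on_def)
  next
    case False
    then have "(x, ys) \<notin> set_pmf (map_pmf (Pair x') (traces d t x'))" by auto
    with False show ?thesis by (simp add: pmf_eq_0_set_pmf)
  qed
  moreover have "joint d n t = pmf_of_set (words n) \<bind> (\<lambda>x. map_pmf (Pair x) (traces d t x))"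
    by (simp add: joint_def map_pmf_def)
  ultimately have "pmf (joint d n t) (x, ys)
                     = (\<Sum>x' \<in> words n. if x' = x then pmf (traces d t x) ys else 0) / card (words n :: bool list set)"
    by (simp only: pmf_bind_pmf_of_set[OF words_nonempty finite_words])
  then show ?thesis
    using assms by (simp add: card_words)
qed

lemma prob_joint:
  "measure_pmf.prob (joint d n t) {(x, ys). P x \<and> ys = y}
     = (\<Sum>x | length x = n \<and> P x. pmf (traces d t x) y) / 2 ^ n"
proof -
  let ?M = "joint d n t"
  let ?B = "(\<lambda>x. (x, y)) ` {x. length x = n \<and> P x}"
  have "set_pmf (pmf_of_set (words n :: bool list set)) = words n"
    by (rule set_pmf_of_set[OF words_nonempty finite_words])
  then have "set_pmf ?M \<subseteq> {(x, ys). length x = n}"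
    by (auto simp: joint_def)
  then have "{(x, ys). P x \<and> ys = y} \<inter> set_pmf ?M = ?B \<inter> set_pmf ?M"
    by auto
  then have "measure_pmf.prob ?M {(x, ys). P x \<and> ys = y} = measure_pmf.prob ?M (?B \<inter> set_pmf ?M)"
    using measure_Int_set_pmf[of ?M "{(x, ys). P x \<and> ys = y}"] by simp
  also have "\<dots> = measure_pmf.prob ?M ?B"
    by (rule measure_Int_set_pmf)
  also have "\<dots> = (\<Sum>x | length x = n \<and> P x. pmf ?M (x, y))"
    by (subst measure_measure_pmf_finite) (simp_all add: sum.reindex inj_on_def)
  also have "\<dots> = (\<Sum>x | length x = n \<and> P x. pmf (traces d t x) y / 2 ^ n)"
    by (rule sum.cong) (simp_all add: pmf_joint)
  finally show ?thesis
    by (simp add: sum_divide_distrib)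
qed

lemma prob_joint_eq_sum_prod_subseq_count:
  assumes "0 \<le> d" "d \<le> 1" "length y = t"
  shows "measure_pmf.prob (joint d n t) {(x, ys). P x \<and> ys = y}
           = (\<Prod>j<t. d ^ (n - length (y ! j)) * (1 - d) ^ length (y ! j)) / 2 ^ n
             * real (\<Sum>x | length x = n \<and> P x. \<Prod>j<t. subseq_count x (y ! j))"
proof -
  have "pmf (traces d t x) y
          = (\<Prod>j<t. d ^ (n - length (y ! j)) * (1 - d) ^ length (y ! j))
            * real (\<Prod>j<t. subseq_count x (y ! j))" if "length x = n" for x
    using assms that by (simp add: pmf_traces pmf_del_chan prod.distrib)
  then show ?thesis
    unfolding prob_joint by (simp add: sum_distrib_left sum_divide_distrib)
qed

lemma real_sum_prod_subseq_count:
  "real (\<Sum>x \<in> words n. \<Prod>j<length ys. subseq_count x (ys ! j))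
     = (\<Sum>k = 0..n. (2::real) ^ (n - k) * real (n choose k)
          * (\<Sum>w \<in> {w :: bool list. length w = k}. real (infil ys w)))"
  by (simp add: sum_prod_subseq_count infil_eq_card_covers)

lemma real_sum_nth_prod_subseq_count:
  assumes "1 \<le> i" "i \<le> n"
  shows "real (\<Sum>x | length x = n \<and> x ! (i - 1). \<Prod>j<length ys. subseq_count x (ys ! j))
     = (\<Sum>k = 0..n. (2::real) ^ (n - k) / 2 * real ((n - 1) choose k)
          * (\<Sum>w \<in> {w :: bool list. length w = k}. real (infil ys w)))
       + (\<Sum>k = 0..n. \<Sum>j = 1..k. (2::real) ^ (n - k)
          * real ((i - 1) choose (j - 1)) * real ((n - i) choose (k - j))
          * (\<Sum>w \<in> {w :: bool list. length w = k \<and> w ! (j - 1)}. real (infil ys w)))"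
proof -
  have p: "i - 1 < n" and n_i: "n - 1 - (i - 1) = n - i" using assms by auto
  have pow: "real (2 ^ (n - 1 - k) * ((n - 1) choose k) * m)
               = (2::real) ^ (n - k) / 2 * real ((n - 1) choose k) * real m" for k m
  proof (cases "k < n")
    case True
    then have "n - k = Suc (n - 1 - k)" by simp
    then show ?thesis by simp
  next
    case False
    then have "(n - 1) choose k = 0" using p by simp
    then show ?thesis by simp
  qed
  have shift: "(\<Sum>j<k. f (Suc j)) = (\<Sum>j = 1..k. f j)" for k and f :: "nat \<Rightarrow> real"
    by (simp add: sum.atLeast1_atMost_eq)
  have set_eq: "{x. length x = n \<and> x ! (i - 1)} = {x. length x = n \<and> x ! (i - 1) = True}"
    by simp
  show ?thesis
    unfolding set_eq sum_nth_prod_subseq_count[OF p] card_UNIV_bool of_nat_add of_nat_sum pow n_i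
      infil_eq_card_covers shift[symmetric]
    by (simp add: of_nat_sum)
qed

theorem theorem7:
  fixes d :: real and n t i :: nat and y :: "bool list list"
  assumes "0 \<le> d" and "d \<le> 1"
    and "t \<ge> 1" and "length y = t"
    and "measure_pmf.prob (joint d n t) {(x, ys). ys = y} > 0"
    and "1 \<le> i" and "i \<le> n"
  shows "measure_pmf.prob (joint d n t) {(x, ys). x ! (i - 1) \<and> ys = y}
           / measure_pmf.prob (joint d n t) {(x, ys). ys = y}
       = ((\<Sum>k = 0..n. (2::real) ^ (n - k) / 2 * real ((n - 1) choose k)
              * (\<Sum>w \<in> {w :: bool list. length w = k}. real (infil y w)))
          + (\<Sum>k = 0..n. \<Sum>j = 1..k. (2::real) ^ (n - k)
              * real ((i - 1) choose (j - 1)) * real ((n - i) choose (k - j))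
              * (\<Sum>w \<in> {w :: bool list. length w = k \<and> w ! (j - 1)}. real (infil y w))))
         / (\<Sum>k = 0..n. (2::real) ^ (n - k) * real (n choose k)
              * (\<Sum>w \<in> {w :: bool list. length w = k}. real (infil y w)))"
proof -
  let ?C = "(\<Prod>j<t. d ^ (n - length (y ! j)) * (1 - d) ^ length (y ! j)) / 2 ^ n"
  let ?N = "\<Sum>x | length x = n \<and> x ! (i - 1). \<Prod>j<length y. subseq_count x (y ! j)"
  let ?D = "\<Sum>x \<in> words n. \<Prod>j<length y. subseq_count x (y ! j)"
  have num: "measure_pmf.prob (joint d n t) {(x, ys). x ! (i - 1) \<and> ys = y} = ?C * real ?N"
    using prob_joint_eq_sum_prod_subseq_count[OF assms(1,2,4), where P = "\<lambda>x. x ! (i - 1)"]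
    by (simp add: assms(4))
  have den: "measure_pmf.prob (joint d n t) {(x, ys). ys = y} = ?C * real ?D"
    using prob_joint_eq_sum_prod_subseq_count[OF assms(1,2,4), where P = "\<lambda>_. True"]
    by (simp add: assms(4))
  have "?C * real ?D \<noteq> 0" using assms(5) unfolding den by linarith
  then have "?C \<noteq> 0" by (metis mult_zero_left)
  then have "measure_pmf.prob (joint d n t) {(x, ys). x ! (i - 1) \<and> ys = y}
               / measure_pmf.prob (joint d n t) {(x, ys). ys = y} = real ?N / real ?D"
    unfolding num den by (rule mult_divide_mult_cancel_left)
  then show ?thesis
    unfolding real_sum_nth_prod_subseq_count[OF assms(6,7)] real_sum_prod_subseq_count .
qed

end
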